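(* Let $d\ge 1$, $T\ge 1$, let $\mathcal{X}\subseteq\mathbb{R}^d$ be a non-empty closed convex set, and let $0<\mu\le L$. Let $f_1,\dots,f_T:\mathcal{X}\to[0,\infty)$ be differentiable with $\frac{\mu}{2}\|y-x\|^2\le f_t(y)-f_t(x)-\langle\nabla f_t(x),y-x\rangle\le\frac{L}{2}\|y-x\|^2$ for all $t$ and $x,y\in\mathcal{X}$. Let $x_1,\dots,x_T$ be the iterates of the OMGD algorithm with $K=\lceil\frac{L+\mu}{2\mu}\ln4\rceil$ from a starting point $x_0\in\mathcal{X}$. Then for any $\alpha>0$, $$\sum_{t=1}^T f_t(x_t)\le\sum_{t=1}^T f_t(x_t^\star)+\frac{1}{2\alpha}\sum_{t=1}^T\|\nabla f_t(x_t^\star)\|^2+(L+\alpha)\big(\|x_1-x_1^\star\|^2+2\mathcal{P}_{2,T}^\star\big).$$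
   Context: $x_t^\star=\arg\min_{x\in\mathcal{X}}f_t(x)$ and $\mathcal{P}_{2,T}^\star=\sum_{t=2}^T\|x_t^\star-x_{t-1}^\star\|^2$. OMGD with parameter $K$: $x_1=x_0$; for $t=2,\dots,T$, $z_t^{(0)}=x_{t-1}$, $z_t^{(k)}=\Pi_{\mathcal{X}}\big(z_t^{(k-1)}-\frac1L\nabla f_{t-1}(z_t^{(k-1)})\big)$ ($k=1,\dots,K$), $x_t=z_t^{(K)}$, where $\Pi_{\mathcal{X}}$ is Euclidean projection onto $\mathcal{X}$. *)

theory Defs
  imports "HOL-Analysis.Analysis"
begin

definition gd_step :: "'a::euclidean_space set \<Rightarrow> real \<Rightarrow> ('a \<Rightarrow> 'a) \<Rightarrow> 'a \<Rightarrow> 'a" where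
  "gd_step X L gr z = closest_point X (z - (1 / L) *\<^sub>R gr z)"

text \<open>OMGD iterates: omgd X L g K x0 t is x_t; index 0 is x_0, x_1 = x_0, and
  x_t = K projected gradient steps on f_(t-1) started from x_(t-1), for t >= 2.\<close>
fun omgd :: "'a::euclidean_space set \<Rightarrow> real \<Rightarrow> (nat \<Rightarrow> 'a \<Rightarrow> 'a) \<Rightarrow> nat \<Rightarrow> 'a \<Rightarrow> nat \<Rightarrow> 'a" where
  "omgd X L g K x0 0 = x0"
| "omgd X L g K x0 (Suc 0) = x0"
| "omgd X L g K x0 (Suc (Suc n)) = (gd_step X L (g (Suc n)) ^^ K) (omgd X L g K x0 (Suc n))"

end

theory Submission
  imports Defs
begin

text \<open>Each round of OMGD runs \<open>K\<close> projected gradient steps on \<open>f\<^sub>t\<^sub>-\<^sub>1\<close>, and each step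
  contracts the squared distance to \<open>x\<^sup>\<star>\<^sub>t\<^sub>-\<^sub>1\<close> by the factor \<open>(L - \<mu>)/(L + \<mu>)\<close>; the choice
  of \<open>K\<close> makes the \<open>K\<close>-fold contraction at most \<open>1/4\<close>. Hence the tracking errors
  \<open>e\<^sub>t = \<parallel>x\<^sub>t - x\<^sup>\<star>\<^sub>t\<parallel>\<^sup>2\<close> satisfy \<open>e\<^sub>t \<le> e\<^sub>t\<^sub>-\<^sub>1/2 + 2\<parallel>x\<^sup>\<star>\<^sub>t - x\<^sup>\<star>\<^sub>t\<^sub>-\<^sub>1\<parallel>\<^sup>2\<close>, so that
  \<open>\<Sum> e\<^sub>t \<le> 2 e\<^sub>1 + 4 P\<^sup>\<star>\<close>. Smoothness and Young's inequality bound each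
  \<open>f\<^sub>t(x\<^sub>t) - f\<^sub>t(x\<^sup>\<star>\<^sub>t)\<close> by \<open>\<parallel>\<nabla>f\<^sub>t(x\<^sup>\<star>\<^sub>t)\<parallel>\<^sup>2/(2\<alpha>) + (L + \<alpha>) e\<^sub>t/2\<close>; summing gives the claim.\<close>

lemma norm_add_power2_le:
  fixes u v :: "'a::real_inner"
  shows "(norm (u + v))\<^sup>2 \<le> 2 * (norm u)\<^sup>2 + 2 * (norm v)\<^sup>2"
proof -
  have "0 \<le> (norm (u - v))\<^sup>2" by simp
  then show ?thesis
    by (simp add: power2_norm_eq_inner inner_add_left inner_add_right inner_diff_left
        inner_diff_right inner_commute)
qed

lemma inner_le_Young:
  fixes u v :: "'a::real_inner"
  assumes "0 < \<alpha>"
  shows "u \<bullet> v \<le> (norm u)\<^sup>2 / (2 * \<alpha>) + \<alpha> / 2 * (norm v)\<^sup>2"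
proof -
  have "0 \<le> (u - \<alpha> *\<^sub>R v) \<bullet> (u - \<alpha> *\<^sub>R v)" by simp
  also have "\<dots> = u \<bullet> u - 2 * \<alpha> * (u \<bullet> v) + \<alpha>\<^sup>2 * (v \<bullet> v)"
    by (simp add: inner_diff_left inner_diff_right inner_commute power2_eq_square algebra_simps)
  finally have "0 \<le> u \<bullet> u - 2 * \<alpha> * (u \<bullet> v) + \<alpha>\<^sup>2 * (v \<bullet> v)" .
  with assms show ?thesis
    unfolding power2_norm_eq_inner by (simp add: field_simps power2_eq_square)
qed

lemma one_minus_power_le_exp:
  fixes c :: real
  assumes "0 \<le> c" "c \<le> 1"
  shows "(1 - c) ^ n \<le> exp (- c * n)"
proof -
  have "(1 - c) ^ n \<le> exp (- c) ^ n"
    using assms exp_ge_add_one_self[of "- c"] by (intro power_mono) auto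
  then show ?thesis by (simp add: exp_of_nat_mult[symmetric] mult.commute)
qed

lemma sum_le_of_halving_recurrence:
  fixes a p :: "nat \<Rightarrow> real"
  assumes "\<And>t. 2 \<le> t \<Longrightarrow> t \<le> n \<Longrightarrow> a t \<le> a (t - 1) / 2 + 2 * p t" "1 \<le> n"
  shows "(\<Sum>t=1..n. a t) + a n \<le> 2 * a 1 + 4 * (\<Sum>t=2..n. p t)"
  using assms(2)
proof (induction n rule: dec_induct)
  case (step m)
  then have "a (Suc m) \<le> a m / 2 + 2 * p (Suc m)"
    using assms(1)[of "Suc m"] by simp
  with step.IH show ?case by simp
qed simp

lemma gd_step_in_set: "closed X \<Longrightarrow> X \<noteq> {} \<Longrightarrow> gd_step X L G z \<in> X"
  unfolding gd_step_def by (rule closest_point_in_set)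

lemma funpow_gd_step_in_set:
  "closed X \<Longrightarrow> X \<noteq> {} \<Longrightarrow> z \<in> X \<Longrightarrow> (gd_step X L G ^^ k) z \<in> X"
  by (cases k) (simp_all add: gd_step_in_set)

lemma omgd_in_set:
  "closed X \<Longrightarrow> X \<noteq> {} \<Longrightarrow> x0 \<in> X \<Longrightarrow> omgd X L g K x0 t \<in> X"
  by (induction X L g K x0 t rule: omgd.induct) (simp_all add: funpow_gd_step_in_set)

lemma omgd_step:
  "2 \<le> t \<Longrightarrow> omgd X L g K x0 t = (gd_step X L (g (t - 1)) ^^ K) (omgd X L g K x0 (t - 1))"
  by (cases t; cases "t - 1") simp_all

lemma contraction_factor_power_le_quarter:
  fixes \<mu> L :: real
  assumes "0 < \<mu>" "\<mu> \<le> L" "(L + \<mu>) / (2 * \<mu>) * ln 4 \<le> real K"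
  shows "((L - \<mu>) / (L + \<mu>)) ^ K \<le> 1 / 4"
proof -
  have factor: "(L - \<mu>) / (L + \<mu>) = 1 - 2 * \<mu> / (L + \<mu>)"
    using assms by (simp add: field_simps)
  have "((L - \<mu>) / (L + \<mu>)) ^ K \<le> exp (- (2 * \<mu> / (L + \<mu>)) * K)"
    unfolding factor using assms by (intro one_minus_power_le_exp) (simp_all add: field_simps)
  also have "\<dots> \<le> exp (- ln 4)"
    using assms by (simp add: field_simps)
  also have "\<dots> = 1 / 4"
    by (simp add: exp_minus)
  finally show ?thesis .
qed

locale smooth_strongly_convex =
  fixes X :: "'a::euclidean_space set" and F :: "'a \<Rightarrow> real" and G :: "'a \<Rightarrow> 'a"
    and \<mu> L :: real
  assumes convex: "convex X" and closed: "closed X" and nonempty: "X \<noteq> {}"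
    and mu_pos: "0 < \<mu>" and mu_le_L: "\<mu> \<le> L"
    and strongly_convex: "\<And>x y. x \<in> X \<Longrightarrow> y \<in> X \<Longrightarrow>
      \<mu> / 2 * (norm (y - x))\<^sup>2 \<le> F y - F x - G x \<bullet> (y - x)"
    and smooth: "\<And>x y. x \<in> X \<Longrightarrow> y \<in> X \<Longrightarrow>
      F y - F x - G x \<bullet> (y - x) \<le> L / 2 * (norm (y - x))\<^sup>2"
begin

lemma minimizer_first_order:
  assumes xs: "xs \<in> X" and min: "\<forall>y\<in>X. F xs \<le> F y" and y: "y \<in> X"
  shows "0 \<le> G xs \<bullet> (y - xs)"
proof -
  define n where "n = (norm (y - xs))\<^sup>2"
  have "- (G xs \<bullet> (y - xs)) \<le> L / 2 * n * s" if s: "0 < s" "s \<le> 1" for s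
  proof -
    have ys: "xs + s *\<^sub>R (y - xs) \<in> X"
      using convexD_alt[OF convex xs y, of s] s by (simp add: algebra_simps)
    have "0 \<le> F (xs + s *\<^sub>R (y - xs)) - F xs"
      using min ys by auto
    also have "\<dots> \<le> G xs \<bullet> (s *\<^sub>R (y - xs)) + L / 2 * (norm (s *\<^sub>R (y - xs)))\<^sup>2"
      using smooth[OF xs ys] by simp
    also have "\<dots> = s * (G xs \<bullet> (y - xs) + L / 2 * n * s)"
      using s unfolding norm_scaleR by (simp add: n_def power_mult_distrib power2_eq_square algebra_simps)
    finally show ?thesis
      using s by (simp add: zero_le_mult_iff)
  qed
  then have "eventually (\<lambda>s. - (G xs \<bullet> (y - xs)) \<le> L / 2 * n * s) (at_right 0)"
    unfolding eventually_at_right_field by (intro exI[of _ 1]) auto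
  moreover have "((\<lambda>s. L / 2 * n * s) \<longlongrightarrow> 0) (at_right 0)"
    by (intro tendsto_eq_intros) auto
  ultimately have "- (G xs \<bullet> (y - xs)) \<le> 0"
    by (intro tendsto_lowerbound) auto
  then show ?thesis by simp
qed

lemma gd_step_contraction:
  assumes z: "z \<in> X" and xs: "xs \<in> X" and min: "\<forall>y\<in>X. F xs \<le> F y"
  shows "(L + \<mu>) * (norm (gd_step X L G z - xs))\<^sup>2 \<le> (L - \<mu>) * (norm (z - xs))\<^sup>2"
proof -
  define p where "p = gd_step X L G z"
  define w where "w = z - (1 / L) *\<^sub>R G z"
  define a where "a = z - p"
  define b where "b = p - xs"
  define c where "c = w - p"
  have pX: "p \<in> X"
    unfolding p_def using closed nonempty by (rule gd_step_in_set)
  have "L > 0" using mu_pos mu_le_L by simp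
  then have Gz: "G z = L *\<^sub>R (a - c)"
    unfolding a_def c_def w_def by (simp add: algebra_simps)
  have z_minus_xs: "z - xs = a + b"
    unfolding a_def b_def by simp
  have smooth_zp: "F p - F z + L * ((a - c) \<bullet> a) \<le> L / 2 * (a \<bullet> a)"
    using smooth[OF z pX] Gz unfolding a_def
    by (simp add: power2_norm_eq_inner inner_commute algebra_simps)
  have sc_zxs: "\<mu> / 2 * ((a + b) \<bullet> (a + b)) \<le> F xs - F z + L * ((a - c) \<bullet> (a + b))"
  proof -
    have "xs - z = - (a + b)"
      using z_minus_xs by (simp add: algebra_simps)
    show ?thesis
      using strongly_convex[OF z xs] unfolding \<open>xs - z = - (a + b)\<close> Gz
      by (simp add: power2_norm_eq_inner del: minus_add_distrib)
  qed
  have sc_xsp: "\<mu> / 2 * (b \<bullet> b) \<le> F p - F xs"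
    using strongly_convex[OF xs pX] minimizer_first_order[OF xs min pX]
    unfolding b_def by (simp add: power2_norm_eq_inner)
  have "(w - p) \<bullet> (xs - p) \<le> 0"
    unfolding p_def gd_step_def w_def by (rule closest_point_dot[OF convex closed xs])
  then have "0 \<le> L * (c \<bullet> b)"
    using \<open>L > 0\<close> unfolding c_def b_def by (simp add: inner_diff_right)
  \<comment> \<open>Adding the three quadratic bounds cancels all function values; the projection
    inequality just obtained disposes of the remaining \<open>c \<bullet> b\<close> term.\<close>
  with smooth_zp sc_zxs sc_xsp
  have "(L + \<mu>) * (b \<bullet> b) \<le> (L - \<mu>) * ((a + b) \<bullet> (a + b))"
    by (simp add: inner_add_left inner_add_right inner_diff_left inner_commute algebra_simps)
  then show ?thesis
    unfolding z_minus_xs p_def[symmetric] b_def by (simp add: power2_norm_eq_inner)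
qed

lemma gd_iterates_contraction:
  assumes z: "z \<in> X" and xs: "xs \<in> X" and min: "\<forall>y\<in>X. F xs \<le> F y"
  shows "(norm ((gd_step X L G ^^ k) z - xs))\<^sup>2 \<le> ((L - \<mu>) / (L + \<mu>)) ^ k * (norm (z - xs))\<^sup>2"
proof (induction k)
  case (Suc k)
  define q where "q = (gd_step X L G ^^ k) z"
  have "q \<in> X"
    unfolding q_def using closed nonempty z by (rule funpow_gd_step_in_set)
  have "L + \<mu> > 0" using mu_pos mu_le_L by simp
  then have "(norm (gd_step X L G q - xs))\<^sup>2 \<le> (L - \<mu>) / (L + \<mu>) * (norm (q - xs))\<^sup>2"
    using gd_step_contraction[OF \<open>q \<in> X\<close> xs min] by (simp add: field_simps)
  also have "\<dots> \<le> (L - \<mu>) / (L + \<mu>) * (((L - \<mu>) / (L + \<mu>)) ^ k * (norm (z - xs))\<^sup>2)"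
    using Suc.IH mu_pos mu_le_L unfolding q_def by (intro mult_left_mono) auto
  finally show ?case
    unfolding q_def by (simp add: mult.assoc)
qed simp

lemma gd_iterates_track_moving_minimizer:
  assumes z: "z \<in> X" and xs: "xs \<in> X" and min: "\<forall>y\<in>X. F xs \<le> F y"
    and rate: "((L - \<mu>) / (L + \<mu>)) ^ K \<le> 1 / 4"
  shows "(norm ((gd_step X L G ^^ K) z - y))\<^sup>2 \<le> (norm (z - xs))\<^sup>2 / 2 + 2 * (norm (y - xs))\<^sup>2"
proof -
  have "(norm ((gd_step X L G ^^ K) z - xs))\<^sup>2 \<le> 1 / 4 * (norm (z - xs))\<^sup>2"
    by (rule order_trans[OF gd_iterates_contraction[OF z xs min] mult_right_mono[OF rate]]) simp
  moreover have "(gd_step X L G ^^ K) z - y = ((gd_step X L G ^^ K) z - xs) + (xs - y)"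
    by simp
  ultimately show ?thesis
    using norm_add_power2_le[of "(gd_step X L G ^^ K) z - xs" "xs - y"]
    by (simp add: norm_minus_commute)
qed

lemma value_le_gradient_norm_plus_distance:
  assumes xs: "xs \<in> X" and x: "x \<in> X" and "0 < \<alpha>"
  shows "F x \<le> F xs + 1 / (2 * \<alpha>) * (norm (G xs))\<^sup>2 + (L + \<alpha>) / 2 * (norm (x - xs))\<^sup>2"
  using smooth[OF xs x] inner_le_Young[OF \<open>0 < \<alpha>\<close>, of "G xs" "x - xs"]
  by (simp add: field_simps)

end

lemma omgd_tracking_error_sum:
  fixes X :: "'a::euclidean_space set"
  assumes "1 \<le> T" and "x0 \<in> X"
    and scs: "\<And>t. t \<in> {1..T} \<Longrightarrow> smooth_strongly_convex X (f t) (g t) \<mu> L"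
    and xs_min: "\<And>t. t \<in> {1..T} \<Longrightarrow> xs t \<in> X \<and> (\<forall>y\<in>X. f t (xs t) \<le> f t y)"
    and rate: "((L - \<mu>) / (L + \<mu>)) ^ K \<le> 1 / 4"
  shows "(\<Sum>t=1..T. (norm (omgd X L g K x0 t - xs t))\<^sup>2)
         \<le> 2 * ((norm (omgd X L g K x0 1 - xs 1))\<^sup>2 + 2 * (\<Sum>t=2..T. (norm (xs t - xs (t - 1)))\<^sup>2))"
proof -
  define x where "x = omgd X L g K x0"
  define e where "e t = (norm (x t - xs t))\<^sup>2" for t
  define p where "p t = (norm (xs t - xs (t - 1)))\<^sup>2" for t
  have "smooth_strongly_convex X (f 1) (g 1) \<mu> L"
    using scs \<open>1 \<le> T\<close> by simp
  then have "closed X" "X \<noteq> {}"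
    by (simp_all add: smooth_strongly_convex.closed smooth_strongly_convex.nonempty)
  then have x_in: "x t \<in> X" for t
    unfolding x_def using \<open>x0 \<in> X\<close> by (rule omgd_in_set)
  have "e t \<le> e (t - 1) / 2 + 2 * p t" if "2 \<le> t" "t \<le> T" for t
  proof -
    have s: "t - 1 \<in> {1..T}" using that by auto
    have "x t = (gd_step X L (g (t - 1)) ^^ K) (x (t - 1))"
      unfolding x_def using that(1) by (rule omgd_step)
    moreover have "xs (t - 1) \<in> X" "\<forall>y\<in>X. f (t - 1) (xs (t - 1)) \<le> f (t - 1) y"
      using xs_min[OF s] by auto
    ultimately show ?thesis
      using smooth_strongly_convex.gd_iterates_track_moving_minimizer[OF scs[OF s] x_in _ _ rate]
      unfolding e_def p_def by simp
  qed
  then have "(\<Sum>t=1..T. e t) + e T \<le> 2 * e 1 + 4 * (\<Sum>t=2..T. p t)"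
    using \<open>1 \<le> T\<close> by (rule sum_le_of_halving_recurrence)
  moreover have "0 \<le> e T" unfolding e_def by simp
  ultimately have "(\<Sum>t=1..T. e t) \<le> 2 * (e 1 + 2 * (\<Sum>t=2..T. p t))" by simp
  then show ?thesis
    unfolding e_def p_def x_def .
qed

theorem lemma2:
  fixes X :: "'a::euclidean_space set"
    and f :: "nat \<Rightarrow> 'a \<Rightarrow> real"
    and g :: "nat \<Rightarrow> 'a \<Rightarrow> 'a"
    and xs :: "nat \<Rightarrow> 'a"
    and x0 :: 'a
    and \<mu> L \<alpha> :: real
    and T :: nat
  assumes "T \<ge> 1"
    and "X \<noteq> {}" and "closed X" and "convex X"
    and "0 < \<mu>" and "\<mu> \<le> L"
    and nonneg: "\<And>t x. t \<in> {1..T} \<Longrightarrow> x \<in> X \<Longrightarrow> f t x \<ge> 0"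
    and deriv: "\<And>t x. t \<in> {1..T} \<Longrightarrow> x \<in> X \<Longrightarrow>
                 (f t has_derivative (\<lambda>h. g t x \<bullet> h)) (at x within X)"
    and lower: "\<And>t x y. t \<in> {1..T} \<Longrightarrow> x \<in> X \<Longrightarrow> y \<in> X \<Longrightarrow>
                 \<mu> / 2 * (norm (y - x))\<^sup>2 \<le> f t y - f t x - g t x \<bullet> (y - x)"
    and upper: "\<And>t x y. t \<in> {1..T} \<Longrightarrow> x \<in> X \<Longrightarrow> y \<in> X \<Longrightarrow>
                 f t y - f t x - g t x \<bullet> (y - x) \<le> L / 2 * (norm (y - x))\<^sup>2"
    and xs_min: "\<And>t. t \<in> {1..T} \<Longrightarrow> xs t \<in> X \<and> (\<forall>y\<in>X. f t (xs t) \<le> f t y)"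
    and "x0 \<in> X"
    and "\<alpha> > 0"
  shows "(\<Sum>t=1..T. f t (omgd X L g (nat \<lceil>(L + \<mu>) / (2 * \<mu>) * ln 4\<rceil>) x0 t))
         \<le> (\<Sum>t=1..T. f t (xs t)) + 1 / (2 * \<alpha>) * (\<Sum>t=1..T. (norm (g t (xs t)))\<^sup>2)
           + (L + \<alpha>) * ((norm (omgd X L g (nat \<lceil>(L + \<mu>) / (2 * \<mu>) * ln 4\<rceil>) x0 1 - xs 1))\<^sup>2
                        + 2 * (\<Sum>t=2..T. (norm (xs t - xs (t - 1)))\<^sup>2))"
proof -
  define K where "K = nat \<lceil>(L + \<mu>) / (2 * \<mu>) * ln 4\<rceil>"
  define x where "x = omgd X L g K x0"
  have scs: "smooth_strongly_convex X (f t) (g t) \<mu> L" if "t \<in> {1..T}" for t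
    using assms lower[OF that] upper[OF that] by unfold_locales auto
  have "(L + \<mu>) / (2 * \<mu>) * ln 4 \<le> real K"
    unfolding K_def by linarith
  then have "((L - \<mu>) / (L + \<mu>)) ^ K \<le> 1 / 4"
    using assms by (intro contraction_factor_power_le_quarter) auto
  then have tracking: "(\<Sum>t=1..T. (norm (x t - xs t))\<^sup>2)
      \<le> 2 * ((norm (x 1 - xs 1))\<^sup>2 + 2 * (\<Sum>t=2..T. (norm (xs t - xs (t - 1)))\<^sup>2))"
    unfolding x_def using assms scs xs_min by (intro omgd_tracking_error_sum)
  have "(\<Sum>t=1..T. f t (x t)) \<le> (\<Sum>t=1..T. f t (xs t) + 1 / (2 * \<alpha>) * (norm (g t (xs t)))\<^sup>2
                                           + (L + \<alpha>) / 2 * (norm (x t - xs t))\<^sup>2)"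
    using smooth_strongly_convex.value_le_gradient_norm_plus_distance[OF scs] xs_min
      omgd_in_set[OF \<open>closed X\<close> \<open>X \<noteq> {}\<close> \<open>x0 \<in> X\<close>] \<open>\<alpha> > 0\<close>
    unfolding x_def by (intro sum_mono) auto
  also have "\<dots> = (\<Sum>t=1..T. f t (xs t)) + 1 / (2 * \<alpha>) * (\<Sum>t=1..T. (norm (g t (xs t)))\<^sup>2)
                  + (L + \<alpha>) / 2 * (\<Sum>t=1..T. (norm (x t - xs t))\<^sup>2)"
    by (simp add: sum.distrib sum_distrib_left)
  also have "\<dots> \<le> (\<Sum>t=1..T. f t (xs t)) + 1 / (2 * \<alpha>) * (\<Sum>t=1..T. (norm (g t (xs t)))\<^sup>2)
      + (L + \<alpha>) * ((norm (x 1 - xs 1))\<^sup>2 + 2 * (\<Sum>t=2..T. (norm (xs t - xs (t - 1)))\<^sup>2))"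
    using tracking assms by (simp add: mult_left_mono)
  finally show ?thesis
    unfolding x_def K_def .
qed

end
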